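(* Let $G=(V,w)$ be a weighted graph and let $\mathcal{L}$ be a maximal cross-free family of cuts of $V$. Suppose that $w(\Delta(X))=c$ for every cut $\Delta(X)\in\mathcal{L}$. Then the minimum cut weight of $G$ is $c$.
   Context: $G=(V,w)$ has nonnegative weights $w$ on unordered pairs of distinct vertices. A cut is identified by an unordered bipartition $\{X,V\setminus X\}$ with $\emptyset\ne X\subsetneq V$; $\Delta(X)$ denotes the set of pairs with exactly one endpoint in $X$, and $w(\Delta(X))$ is the sum of their weights. Sets $X,Y\subseteq V$ cross if $X\cap Y$, $X\setminus Y$, $Y\setminus X$, $V\setminus(X\cup Y)$ are all nonempty; cuts cross if their shores cross. A family of cuts is cross-free if no two members cross, and maximal cross-free if no other cut (bipartition of $V$) can be added while keeping it cross-free. *)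

theory Defs
  imports Complex_Main
begin

definition weighted_graph :: "'a set \<Rightarrow> ('a \<Rightarrow> 'a \<Rightarrow> real) \<Rightarrow> bool" where
  "weighted_graph V w \<longleftrightarrow> finite V \<and>
     (\<forall>x\<in>V. \<forall>y\<in>V. x \<noteq> y \<longrightarrow> w x y = w y x \<and> 0 \<le> w x y)"

definition is_cut :: "'a set \<Rightarrow> 'a set set \<Rightarrow> bool" where
  "is_cut V C \<longleftrightarrow> (\<exists>X. X \<noteq> {} \<and> X \<subset> V \<and> C = {X, V - X})"

text \<open>w(Delta(X)): each pair with exactly one endpoint in X counted once.\<close>
definition cut_weight :: "'a set \<Rightarrow> ('a \<Rightarrow> 'a \<Rightarrow> real) \<Rightarrow> 'a set \<Rightarrow> real" where
  "cut_weight V w X = (\<Sum>(x, y) \<in> X \<times> (V - X). w x y)"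

definition crosses :: "'a set \<Rightarrow> 'a set \<Rightarrow> 'a set \<Rightarrow> bool" where
  "crosses V X Y \<longleftrightarrow> X \<inter> Y \<noteq> {} \<and> X - Y \<noteq> {} \<and> Y - X \<noteq> {} \<and> V - (X \<union> Y) \<noteq> {}"

definition cuts_cross :: "'a set \<Rightarrow> 'a set set \<Rightarrow> 'a set set \<Rightarrow> bool" where
  "cuts_cross V C D \<longleftrightarrow> (\<exists>X\<in>C. \<exists>Y\<in>D. crosses V X Y)"

definition cross_free :: "'a set \<Rightarrow> 'a set set set \<Rightarrow> bool" where
  "cross_free V L \<longleftrightarrow> (\<forall>C\<in>L. \<forall>D\<in>L. \<not> cuts_cross V C D)"

definition maximal_cross_free :: "'a set \<Rightarrow> 'a set set set \<Rightarrow> bool" where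
  "maximal_cross_free V L \<longleftrightarrow> (\<forall>C\<in>L. is_cut V C) \<and> cross_free V L \<and>
     (\<forall>C. is_cut V C \<and> C \<notin> L \<longrightarrow> \<not> cross_free V (insert C L))"

definition min_cut_weight :: "'a set \<Rightarrow> ('a \<Rightarrow> 'a \<Rightarrow> real) \<Rightarrow> real" where
  "min_cut_weight V w = Min {cut_weight V w X | X. X \<noteq> {} \<and> X \<subset> V}"

end

theory Submission
  imports Defs
begin

text \<open>Fix a root r \<in> V. The shores of members of L that avoid r form a laminar family containing
  V - {r} and every {v} with v \<noteq> r. By maximality each member S with at least two elements is the
  disjoint union of two members: a maximal proper member A of S, and S - A, which crosses nothing.
  Since A, S - A and S all have cut weight c, the pairs between A and S - A weigh exactly c in
  total, so by induction on S every nonempty X \<subseteq> S has cut weight at least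
  w(\<Delta>(X \<inter> A)) + w(\<Delta>(X - A)) - c \<ge> c. Complementation handles the sets containing r.\<close>

lemma crosses_commute: "crosses V X Y = crosses V Y X"
  unfolding crosses_def by auto

lemma crosses_Diff_right: "X \<subseteq> V \<Longrightarrow> Y \<subseteq> V \<Longrightarrow> crosses V X (V - Y) = crosses V X Y"
  unfolding crosses_def by auto

lemma not_crosses_self: "\<not> crosses V X X"
  unfolding crosses_def by auto

lemma not_crosses_Diff_self: "\<not> crosses V X (V - X)"
  unfolding crosses_def by auto

lemma not_crosses_singleton: "\<not> crosses V {v} Y"
  unfolding crosses_def by auto

lemma is_cut_shore_subset: "is_cut V C \<Longrightarrow> Y \<in> C \<Longrightarrow> Y \<subseteq> V"
  unfolding is_cut_def by auto

lemma is_cut_Diff_shore: "is_cut V C \<Longrightarrow> Y \<in> C \<Longrightarrow> V - Y \<in> C"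
  unfolding is_cut_def by auto

lemma is_cut_shore_nonempty: "is_cut V C \<Longrightarrow> Y \<in> C \<Longrightarrow> Y \<noteq> {}"
  unfolding is_cut_def by auto

lemma cross_free_insert:
  assumes cf: "cross_free V L" and cuts: "\<forall>C\<in>L. is_cut V C" and "Z \<subseteq> V"
    and nc: "\<forall>D\<in>L. \<forall>Y\<in>D. \<not> crosses V Z Y"
  shows "cross_free V (insert {Z, V - Z} L)"
proof -
  have nc_Diff: "\<not> crosses V (V - Z) Y" if "D \<in> L" "Y \<in> D" for D Y
  proof -
    have "Y \<subseteq> V" using is_cut_shore_subset cuts that by blast
    then have "crosses V (V - Z) Y = crosses V Z Y"
      using crosses_Diff_right[of Y V Z] \<open>Z \<subseteq> V\<close> by (simp add: crosses_commute)
    then show ?thesis using nc that by blast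
  qed
  have new: "\<not> crosses V X Y" if "X \<in> {Z, V - Z}" "Y \<in> D" "D \<in> insert {Z, V - Z} L" for X Y D
  proof (cases "D \<in> L")
    case True
    then show ?thesis using that nc nc_Diff by blast
  next
    case False
    then have "Y \<in> {Z, V - Z}" using that by blast
    then show ?thesis using that(1) not_crosses_self[of V] not_crosses_Diff_self[of V Z]
        crosses_commute[of V "V - Z" Z] by auto
  qed
  show ?thesis
    unfolding cross_free_def cuts_cross_def
  proof (intro ballI notI, elim bexE)
    fix C D X Y assume C: "C \<in> insert {Z, V - Z} L" and D: "D \<in> insert {Z, V - Z} L"
      and XY: "X \<in> C" "Y \<in> D" "crosses V X Y"
    show False
    proof (cases "C \<in> L \<and> D \<in> L")
      case True
      then show False using cf XY unfolding cross_free_def cuts_cross_def by blast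
    next
      case False
      then have "C = {Z, V - Z} \<or> D = {Z, V - Z}" using C D by blast
      moreover have "crosses V Y X" using XY(3) by (simp add: crosses_commute)
      ultimately show False using new[of X Y D] new[of Y X C] XY C D by blast
    qed
  qed
qed

lemma maximal_cross_free_mem:
  assumes m: "maximal_cross_free V L" and "Z \<noteq> {}" "Z \<subset> V"
    and nc: "\<forall>D\<in>L. \<forall>Y\<in>D. \<not> crosses V Z Y"
  shows "{Z, V - Z} \<in> L"
proof -
  have L: "cross_free V L" "\<forall>C\<in>L. is_cut V C"
    and maximal: "\<And>C. is_cut V C \<Longrightarrow> C \<notin> L \<Longrightarrow> \<not> cross_free V (insert C L)"
    using m unfolding maximal_cross_free_def by blast+
  have "is_cut V {Z, V - Z}" unfolding is_cut_def using assms by blast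
  moreover have "cross_free V (insert {Z, V - Z} L)"
    using cross_free_insert[OF L _ nc] \<open>Z \<subset> V\<close> by blast
  ultimately show ?thesis using maximal by blast
qed

lemma maximal_cross_free_singleton:
  assumes "maximal_cross_free V L" "2 \<le> card V" "v \<in> V"
  shows "{{v}, V - {v}} \<in> L"
proof -
  have "card V \<noteq> card {v}" using assms(2) by simp
  then have "{v} \<subset> V" using assms(3) by blast
  then show ?thesis
    by (intro maximal_cross_free_mem[OF assms(1)]) (simp_all add: not_crosses_singleton)
qed

definition shores_avoiding :: "'a set set set \<Rightarrow> 'a \<Rightarrow> 'a set set" where
  "shores_avoiding L r = {S. r \<notin> S \<and> (\<exists>C\<in>L. S \<in> C)}"

lemma shores_avoiding_subset:
  assumes "maximal_cross_free V L" "S \<in> shores_avoiding L r"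
  shows "S \<noteq> {}" "S \<subseteq> V"
proof -
  obtain C where C: "C \<in> L" "S \<in> C" using assms(2) unfolding shores_avoiding_def by blast
  then have "is_cut V C" using assms(1) unfolding maximal_cross_free_def by blast
  then show "S \<noteq> {}" "S \<subseteq> V" using is_cut_shore_nonempty is_cut_shore_subset C(2) by blast+
qed

lemma shores_avoiding_laminar:
  assumes "maximal_cross_free V L" "r \<in> V" "S \<in> shores_avoiding L r" "Y \<in> shores_avoiding L r"
  shows "S \<subseteq> Y \<or> Y \<subseteq> S \<or> S \<inter> Y = {}"
proof -
  have "\<not> crosses V S Y"
    using assms unfolding shores_avoiding_def maximal_cross_free_def cross_free_def cuts_cross_def
    by blast
  then show ?thesis using assms(2-4) unfolding crosses_def shores_avoiding_def by auto
qed

lemma shores_avoiding_not_crosses: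
  assumes m: "maximal_cross_free V L" and "Z \<subseteq> V"
    and nc: "\<And>Y. Y \<in> shores_avoiding L r \<Longrightarrow> \<not> crosses V Z Y"
  shows "\<forall>D\<in>L. \<forall>Y\<in>D. \<not> crosses V Z Y"
proof (intro ballI)
  fix D Y assume D: "D \<in> L" and Y: "Y \<in> D"
  have "is_cut V D" using m D unfolding maximal_cross_free_def by blast
  then have YV: "Y \<subseteq> V" and "V - Y \<in> D" using is_cut_shore_subset is_cut_Diff_shore Y by blast+
  show "\<not> crosses V Z Y"
  proof (cases "r \<in> Y")
    case True
    then have "V - Y \<in> shores_avoiding L r" using D \<open>V - Y \<in> D\<close> unfolding shores_avoiding_def by blast
    then show ?thesis using nc crosses_Diff_right[OF \<open>Z \<subseteq> V\<close> YV] by auto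
  next
    case False
    then have "Y \<in> shores_avoiding L r" using D Y unfolding shores_avoiding_def by blast
    then show ?thesis by (rule nc)
  qed
qed

lemma shores_avoiding_split:
  assumes m: "maximal_cross_free V L" and r: "r \<in> V" and "finite V"
    and S: "S \<in> shores_avoiding L r" "2 \<le> card S"
  shows "\<exists>A\<in>shores_avoiding L r. \<exists>B\<in>shores_avoiding L r. A \<inter> B = {} \<and> A \<union> B = S"
proof -
  let ?F = "shores_avoiding L r"
  let ?G = "{A \<in> ?F. A \<subset> S}"
  have SV: "S \<subseteq> V" using shores_avoiding_subset[OF m S(1)] by blast
  have rS: "r \<notin> S" using S(1) unfolding shores_avoiding_def by blast
  have finS: "finite S" using finite_subset[OF SV \<open>finite V\<close>] .
  have "card S \<noteq> 0" "card S \<noteq> 1" using S(2) by simp_all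
  obtain v where v: "v \<in> S" "S \<noteq> {v}"
  proof -
    obtain v where "v \<in> S" using \<open>card S \<noteq> 0\<close> by (metis card.empty ex_in_conv)
    moreover have "S \<noteq> {v}" using \<open>card S \<noteq> 1\<close> by auto
    ultimately show thesis using that by blast
  qed
  have "2 \<le> card V" using S(2) card_mono[OF \<open>finite V\<close> SV] by linarith
  then have "{{v}, V - {v}} \<in> L" using maximal_cross_free_singleton[OF m] v(1) SV by blast
  then have "{v} \<in> ?G" using v rS unfolding shores_avoiding_def by blast
  moreover have "finite ?G" by (rule rev_finite_subset[of "Pow S"]) (use finS in auto)
  ultimately obtain A where A: "A \<in> ?G" and A_max: "\<forall>Y\<in>?G. A \<subseteq> Y \<longrightarrow> A = Y"
    using finite_has_maximal[of ?G] by auto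
  define B where "B = S - A"
  have B: "B \<noteq> {}" "B \<subset> V" using A SV rS r unfolding B_def by auto
  have nc: "\<not> crosses V B Y" if Y: "Y \<in> ?F" for Y
  proof -
    have SY: "S \<subseteq> Y \<or> Y \<subseteq> S \<or> S \<inter> Y = {}" and AY: "A \<subseteq> Y \<or> Y \<subseteq> A \<or> A \<inter> Y = {}"
      using shores_avoiding_laminar[OF m r] S(1) A Y by blast+
    have "Y = A" if "A \<subseteq> Y" "Y \<subset> S" using A_max that Y by blast
    then have "B \<subseteq> Y \<or> B \<inter> Y = {} \<or> Y \<subseteq> B"
      using SY AY A unfolding B_def by blast
    then show ?thesis unfolding crosses_def by blast
  qed
  have "B \<subseteq> V" using B(2) by blast
  then have "\<forall>D\<in>L. \<forall>Y\<in>D. \<not> crosses V B Y" using shores_avoiding_not_crosses[OF m _ nc] by blast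
  then have "{B, V - B} \<in> L" using maximal_cross_free_mem[OF m B(1,2)] by blast
  then have "B \<in> ?F" using rS unfolding shores_avoiding_def B_def by blast
  moreover have "A \<in> ?F" "A \<inter> B = {}" "A \<union> B = S" using A unfolding B_def by auto
  ultimately show ?thesis by blast
qed

definition pair_weight :: "('a \<Rightarrow> 'a \<Rightarrow> real) \<Rightarrow> 'a set \<Rightarrow> 'a set \<Rightarrow> real" where
  "pair_weight w P Q = (\<Sum>(x, y) \<in> P \<times> Q. w x y)"

lemma cut_weight_Un:
  assumes "finite V" "P \<inter> Q = {}" "P \<union> Q \<subseteq> V"
  shows "cut_weight V w (P \<union> Q)
           = cut_weight V w P + cut_weight V w Q - pair_weight w P Q - pair_weight w Q P"
proof -
  let ?R = "V - (P \<union> Q)"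
  have fin: "finite P" "finite Q" "finite ?R" using assms finite_subset by auto
  have "P \<times> (V - P) = P \<times> ?R \<union> P \<times> Q" "Q \<times> (V - Q) = Q \<times> ?R \<union> Q \<times> P"
    "(P \<union> Q) \<times> ?R = P \<times> ?R \<union> Q \<times> ?R"
    using assms by auto
  then show ?thesis
    unfolding cut_weight_def pair_weight_def using assms fin
    by (simp add: sum.union_disjoint disjoint_iff)
qed

lemma pair_weight_mono:
  assumes "weighted_graph V w" "P' \<subseteq> P" "Q' \<subseteq> Q" "P \<inter> Q = {}" "P \<union> Q \<subseteq> V"
  shows "pair_weight w P' Q' \<le> pair_weight w P Q"
  unfolding pair_weight_def
proof (rule sum_mono2)
  show "finite (P \<times> Q)"
    using assms unfolding weighted_graph_def by (meson finite_SigmaI finite_subset le_sup_iff)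
  show "P' \<times> Q' \<subseteq> P \<times> Q" using assms by auto
  fix b assume "b \<in> P \<times> Q - P' \<times> Q'"
  then obtain x y where "b = (x, y)" "x \<in> P" "y \<in> Q" by auto
  moreover have "x \<noteq> y" "x \<in> V" "y \<in> V" using calculation assms(4,5) by auto
  ultimately show "0 \<le> (case b of (x, y) \<Rightarrow> w x y)"
    using assms(1) unfolding weighted_graph_def by auto
qed

lemma cut_weight_Diff:
  assumes "weighted_graph V w" "X \<subseteq> V"
  shows "cut_weight V w (V - X) = cut_weight V w X"
proof -
  have fin: "finite X" "finite (V - X)"
    using assms finite_subset unfolding weighted_graph_def by auto
  have "V - (V - X) = X" using assms by auto
  then have "cut_weight V w (V - X) = (\<Sum>x\<in>V - X. \<Sum>y\<in>X. w x y)"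
    unfolding cut_weight_def using fin by (simp add: sum.cartesian_product)
  also have "\<dots> = (\<Sum>y\<in>X. \<Sum>x\<in>V - X. w x y)" by (rule sum.swap)
  also have "\<dots> = (\<Sum>y\<in>X. \<Sum>x\<in>V - X. w y x)"
    using assms unfolding weighted_graph_def by (intro sum.cong refl) (metis Diff_iff subsetD)
  also have "\<dots> = cut_weight V w X"
    unfolding cut_weight_def using fin by (simp add: sum.cartesian_product)
  finally show ?thesis .
qed

lemma cut_weight_Un_ge:
  assumes wg: "weighted_graph V w" and AB: "A \<inter> B = {}" "A \<union> B \<subseteq> V"
    and c: "cut_weight V w A = c" "cut_weight V w B = c" "cut_weight V w (A \<union> B) = c"
    and PQ: "P \<subseteq> A" "Q \<subseteq> B" "c \<le> cut_weight V w P" "c \<le> cut_weight V w Q"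
  shows "c \<le> cut_weight V w (P \<union> Q)"
proof -
  have fin: "finite V" using wg unfolding weighted_graph_def by blast
  have "pair_weight w A B + pair_weight w B A = c"
    using cut_weight_Un[OF fin AB, of w] c by linarith
  moreover have "pair_weight w P Q \<le> pair_weight w A B" "pair_weight w Q P \<le> pair_weight w B A"
    using pair_weight_mono[OF wg] AB PQ by (auto simp: Un_commute Int_commute)
  moreover have "cut_weight V w (P \<union> Q)
      = cut_weight V w P + cut_weight V w Q - pair_weight w P Q - pair_weight w Q P"
    using cut_weight_Un[OF fin, of P Q w] AB PQ by blast
  ultimately show ?thesis using PQ by linarith
qed

lemma cut_weight_ge_of_binary_family:
  assumes wg: "weighted_graph V w"
    and F: "\<And>S. S \<in> F \<Longrightarrow> S \<noteq> {} \<and> S \<subseteq> V \<and> cut_weight V w S = c"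
    and split: "\<And>S. S \<in> F \<Longrightarrow> 2 \<le> card S \<Longrightarrow> \<exists>A\<in>F. \<exists>B\<in>F. A \<inter> B = {} \<and> A \<union> B = S"
    and "S \<in> F" "X \<noteq> {}" "X \<subseteq> S"
  shows "c \<le> cut_weight V w X"
  using assms(4-)
proof (induction "card S" arbitrary: S X rule: less_induct)
  case less
  have fin: "finite S" using F[OF less.prems(1)] wg finite_subset unfolding weighted_graph_def by blast
  show ?case
  proof (cases "2 \<le> card S")
    case False
    moreover have "card S \<noteq> 0" using F[OF less.prems(1)] fin by simp
    ultimately have "card S = 1" by linarith
    then have "X = S" using less.prems by (metis card_1_singletonE subset_singletonD)
    then show ?thesis using F[OF less.prems(1)] by simp
  next
    case True
    then obtain A B where AB: "A \<in> F" "B \<in> F" "A \<inter> B = {}" "A \<union> B = S"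
      using split[OF less.prems(1)] by blast
    have ne: "A \<noteq> {}" "B \<noteq> {}" using F AB by blast+
    have card: "card A < card S" "card B < card S"
      using AB ne fin by (auto simp: card_Un_disjoint card_gt_0_iff)
    have IH: "c \<le> cut_weight V w Y" if "Y \<noteq> {}" "Y \<subseteq> A \<or> Y \<subseteq> B" for Y
      using less.hyps card AB that by blast
    have X: "X = (X \<inter> A) \<union> (X \<inter> B)" using less.prems AB by blast
    show ?thesis
    proof (cases "X \<inter> A = {} \<or> X \<inter> B = {}")
      case True
      then have "X \<subseteq> A \<or> X \<subseteq> B" using X by blast
      then show ?thesis using IH less.prems(2) by blast
    next
      case False
      have "c \<le> cut_weight V w ((X \<inter> A) \<union> (X \<inter> B))"
      proof (rule cut_weight_Un_ge[OF wg AB(3)])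
        show "A \<union> B \<subseteq> V" "cut_weight V w A = c" "cut_weight V w B = c" "cut_weight V w (A \<union> B) = c"
          using F AB(1,2) F[OF less.prems(1)] AB(4) by auto
        show "c \<le> cut_weight V w (X \<inter> A)" "c \<le> cut_weight V w (X \<inter> B)"
          using IH False by auto
      qed auto
      then show ?thesis using X by metis
    qed
  qed
qed

lemma maximal_cross_free_cut_weight_ge:
  assumes wg: "weighted_graph V w" and m: "maximal_cross_free V L" and "2 \<le> card V" and r: "r \<in> V"
    and c: "\<forall>C\<in>L. \<forall>X\<in>C. cut_weight V w X = c"
    and X: "X \<noteq> {}" "X \<subseteq> V - {r}"
  shows "c \<le> cut_weight V w X"
proof (rule cut_weight_ge_of_binary_family[OF wg, where F = "shores_avoiding L r" and S = "V - {r}"])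
  have fin: "finite V" using wg unfolding weighted_graph_def by blast
  show "S \<noteq> {} \<and> S \<subseteq> V \<and> cut_weight V w S = c" if "S \<in> shores_avoiding L r" for S
    using shores_avoiding_subset[OF m that] that c unfolding shores_avoiding_def by blast
  show "\<exists>A\<in>shores_avoiding L r. \<exists>B\<in>shores_avoiding L r. A \<inter> B = {} \<and> A \<union> B = S"
    if "S \<in> shores_avoiding L r" "2 \<le> card S" for S
    using shores_avoiding_split[OF m r fin that] .
  show "V - {r} \<in> shores_avoiding L r"
    using maximal_cross_free_singleton[OF m assms(3) r] unfolding shores_avoiding_def by blast
qed (fact X)+

lemma cut_weight_ge_by_complement:
  assumes wg: "weighted_graph V w" and "r \<in> V"
    and below: "\<And>X. X \<noteq> {} \<Longrightarrow> X \<subseteq> V - {r} \<Longrightarrow> c \<le> cut_weight V w X"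
    and X: "X \<noteq> {}" "X \<subset> V"
  shows "c \<le> cut_weight V w X"
proof (cases "r \<in> X")
  case True
  then have "V - X \<noteq> {}" "V - X \<subseteq> V - {r}" using X by auto
  then have "c \<le> cut_weight V w (V - X)" by (rule below)
  moreover have "cut_weight V w (V - X) = cut_weight V w X"
    using cut_weight_Diff[OF wg] X(2) by blast
  ultimately show ?thesis by simp
next
  case False
  then show ?thesis using below X by blast
qed

lemma min_cut_weight_eqI:
  assumes "finite V" "X \<noteq> {}" "X \<subset> V" "cut_weight V w X = c"
    and "\<And>Y. Y \<noteq> {} \<Longrightarrow> Y \<subset> V \<Longrightarrow> c \<le> cut_weight V w Y"
  shows "min_cut_weight V w = c"
proof -
  let ?M = "{cut_weight V w X | X. X \<noteq> {} \<and> X \<subset> V}"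
  have "finite ?M"
    using finite_subset[of ?M "cut_weight V w ` Pow V"] assms(1) by blast
  then show ?thesis
    unfolding min_cut_weight_def using assms by (intro Min_eqI) blast+
qed

theorem lemma9:
  fixes V :: "'a set" and w :: "'a \<Rightarrow> 'a \<Rightarrow> real" and L :: "'a set set set" and c :: real
  assumes "weighted_graph V w"
    and "2 \<le> card V"
    and "maximal_cross_free V L"
    and "\<forall>C\<in>L. \<forall>X\<in>C. cut_weight V w X = c"
  shows "min_cut_weight V w = c"
proof -
  have fin: "finite V" using assms(1) unfolding weighted_graph_def by blast
  have "V \<noteq> {}" using assms(2) by (metis card.empty not_numeral_le_zero)
  then obtain r where r: "r \<in> V" by blast
  have "card V \<noteq> card {r}" using assms(2) by simp
  then have "{r} \<subset> V" using r by blast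
  moreover have "cut_weight V w {r} = c"
    using maximal_cross_free_singleton[OF assms(3,2) r] assms(4) by blast
  moreover have lower: "c \<le> cut_weight V w X" if "X \<noteq> {}" "X \<subset> V" for X
  proof (rule cut_weight_ge_by_complement[OF assms(1) r _ that])
    show "c \<le> cut_weight V w Y" if "Y \<noteq> {}" "Y \<subseteq> V - {r}" for Y
      using maximal_cross_free_cut_weight_ge[OF assms(1,3,2) r assms(4) that] .
  qed
  ultimately show ?thesis using min_cut_weight_eqI[OF fin _ _ _ lower, of "{r}"] by blast
qed

end
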